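(* Let $A$ be a commutative ring and $\sigma$ a hereditary torsion theory on $A$-modules. (i) If $L\subseteq M$ is a totally $\sigma$-torsion submodule of an $A$-module $M$, then $M$ is totally $\sigma$-simple if and only if $M/L$ is totally $\sigma$-simple. (ii) If $M\subseteq M'$ are $A$-modules and there exists $\mathfrak{h}_0\in\mathcal{L}(\sigma)$ with $M'\mathfrak{h}_0\subseteq M$, then $M$ is totally $\sigma$-simple if and only if $M'$ is totally $\sigma$-simple.
   Context: $\mathcal{L}(\sigma)$ is the Gabriel filter of $\sigma$. A module $X$ is totally $\sigma$-torsion if $X\mathfrak{k}=0$ for some $\mathfrak{k}\in\mathcal{L}(\sigma)$. An $A$-module $M$ is totally $\sigma$-simple if $M$ is not totally $\sigma$-torsion and there exists $\mathfrak{h}\in\mathcal{L}(\sigma)$ such that $M\mathfrak{h}\subseteq H$ for every submodule $H\subseteq M$ that is not totally $\sigma$-torsion. *)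

theory Defs
  imports "HOL-Algebra.Module" "HOL-Algebra.Ideal" "HOL-Algebra.AbelCoset"
begin

definition ideal_colon :: "('a, 'c) ring_scheme \<Rightarrow> 'a set \<Rightarrow> 'a \<Rightarrow> 'a set" where
  "ideal_colon R J r = {a \<in> carrier R. a \<otimes>\<^bsub>R\<^esub> r \<in> J}"

text \<open>Gabriel filter on a commutative ring R (the filter L(sigma) of a hereditary
  torsion theory sigma; hereditary torsion theories correspond bijectively to Gabriel filters).\<close>
definition gabriel_filter :: "('a, 'c) ring_scheme \<Rightarrow> 'a set set \<Rightarrow> bool" where
  "gabriel_filter R F \<longleftrightarrow>
     F \<noteq> {} \<and>
     (\<forall>I\<in>F. ideal I R) \<and>
     (\<forall>I J. I \<in> F \<and> ideal J R \<and> I \<subseteq> J \<longrightarrow> J \<in> F) \<and>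
     (\<forall>I J. I \<in> F \<and> J \<in> F \<longrightarrow> I \<inter> J \<in> F) \<and>
     (\<forall>I\<in>F. \<forall>r\<in>carrier R. ideal_colon R I r \<in> F) \<and>
     (\<forall>I J. ideal J R \<and> I \<in> F \<and> (\<forall>r\<in>I. ideal_colon R J r \<in> F) \<longrightarrow> J \<in> F)"

definition module_ideal_prod ::
  "('a, 'c) ring_scheme \<Rightarrow> ('a, 'b, 'd) module_scheme \<Rightarrow> 'b set \<Rightarrow> 'a set \<Rightarrow> 'b set" where
  "module_ideal_prod R M X K =
     \<Inter>{N. submodule N R M \<and> {k \<odot>\<^bsub>M\<^esub> x | k x. k \<in> K \<and> x \<in> X} \<subseteq> N}"

definition totally_torsion ::
  "('a, 'c) ring_scheme \<Rightarrow> 'a set set \<Rightarrow> ('a, 'b, 'd) module_scheme \<Rightarrow> 'b set \<Rightarrow> bool" where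
  "totally_torsion R F M X \<longleftrightarrow> (\<exists>K\<in>F. module_ideal_prod R M X K = {\<zero>\<^bsub>M\<^esub>})"

definition totally_simple ::
  "('a, 'c) ring_scheme \<Rightarrow> 'a set set \<Rightarrow> ('a, 'b, 'd) module_scheme \<Rightarrow> bool" where
  "totally_simple R F M \<longleftrightarrow>
     \<not> totally_torsion R F M (carrier M) \<and>
     (\<exists>h\<in>F. \<forall>H. submodule H R M \<and> \<not> totally_torsion R F M H
                  \<longrightarrow> module_ideal_prod R M (carrier M) h \<subseteq> H)"

definition quot_module ::
  "('a, 'c) ring_scheme \<Rightarrow> ('a, 'b, 'd) module_scheme \<Rightarrow> 'b set \<Rightarrow> ('a, 'b set) module" where
  "quot_module R M L =
     \<lparr> carrier = a_rcosets\<^bsub>M\<^esub> L,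
       mult = (\<lambda>X Y. undefined), one = undefined,
       zero = L,
       add = set_add M,
       smult = (\<lambda>r X. L +>\<^bsub>M\<^esub> (r \<odot>\<^bsub>M\<^esub> (SOME x. x \<in> X))) \<rparr>"

end

theory Submission
  imports Defs
begin

(* Everything rests on one closure property of a Gabriel filter: if I, K \<in> L(\<sigma>) and
   b(aX) \<subseteq> H for all a \<in> I, b \<in> K, then the colon ideal (H : X) lies in L(\<sigma>), because its
   colon by any a \<in> I contains K. With H = 0 this says that X is totally \<sigma>-torsion as soon as
   KX lies in a totally \<sigma>-torsion submodule. Consequently the projection M \<rightarrow> M/L (L totally
   torsion) and the map H \<mapsto> H \<inter> N (when h0 M' \<subseteq> N) preserve and reflect total torsion of
   submodules. A uniform ideal h witnessing total simplicity then passes directly from M to M/L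
   and from M' to N; in the converse direction the same closure property, applied to the
   intersection of all non-torsion submodules, combines h with an ideal annihilating L,
   resp. with h0, into a new uniform ideal. *)

section \<open>Gabriel filters\<close>

lemma ideal_colon_ideal:
  fixes R (structure)
  assumes "cring R" and "ideal J R" and r: "r \<in> carrier R"
  shows "ideal (ideal_colon R J r) R"
proof -
  interpret cring R by fact
  interpret ideal J R by fact
  show ?thesis
  proof (rule idealI)
    show "ring R" by (rule ring_axioms)
    show "subgroup (ideal_colon R J r) (add_monoid R)"
    proof (rule add.subgroupI)
      show "ideal_colon R J r \<noteq> {}"
        using r by (auto simp: ideal_colon_def intro!: exI[of _ \<zero>])
    qed (use r in \<open>auto simp: ideal_colon_def l_minus l_distr\<close>)
  next
    fix a x assume "a \<in> ideal_colon R J r" "x \<in> carrier R"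
    then show "x \<otimes> a \<in> ideal_colon R J r"
      using r by (simp add: ideal_colon_def m_assoc I_l_closed)
  next
    fix a x assume a: "a \<in> ideal_colon R J r" and x: "x \<in> carrier R"
    then have "a \<otimes> x \<otimes> r = x \<otimes> (a \<otimes> r)"
      using r by (simp add: ideal_colon_def m_assoc m_lcomm)
    then show "a \<otimes> x \<in> ideal_colon R J r"
      using r a x by (simp add: ideal_colon_def I_l_closed)
  qed
qed

lemma gabriel_filter_ideal: "gabriel_filter R F \<Longrightarrow> I \<in> F \<Longrightarrow> ideal I R"
  unfolding gabriel_filter_def by blast

lemma gabriel_filter_subset_carrier: "gabriel_filter R F \<Longrightarrow> I \<in> F \<Longrightarrow> I \<subseteq> carrier R"
  using gabriel_filter_ideal ideal.axioms(1) additive_subgroup.a_subset by metis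

lemma gabriel_filter_upward_closed:
  assumes "gabriel_filter R F" and "I \<in> F" "ideal J R" "I \<subseteq> J"
  shows "J \<in> F"
proof -
  have "\<forall>I J. I \<in> F \<and> ideal J R \<and> I \<subseteq> J \<longrightarrow> J \<in> F"
    using assms(1) unfolding gabriel_filter_def by (elim conjE)
  with assms(2-4) show ?thesis by blast
qed

lemma gabriel_filter_by_colons:
  assumes "gabriel_filter R F" and "ideal J R" "I \<in> F" "\<And>r. r \<in> I \<Longrightarrow> ideal_colon R J r \<in> F"
  shows "J \<in> F"
proof -
  have "\<forall>I J. ideal J R \<and> I \<in> F \<and> (\<forall>r\<in>I. ideal_colon R J r \<in> F) \<longrightarrow> J \<in> F"
    using assms(1) unfolding gabriel_filter_def by (elim conjE)
  with assms(2-4) show ?thesis by blast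
qed

lemma gabriel_filter_of_products:
  assumes "cring R" and G: "gabriel_filter R F" and J: "ideal J R" and "I \<in> F" "K \<in> F"
    and prod: "\<And>a b. a \<in> I \<Longrightarrow> b \<in> K \<Longrightarrow> b \<otimes>\<^bsub>R\<^esub> a \<in> J"
  shows "J \<in> F"
proof (rule gabriel_filter_by_colons[OF G J \<open>I \<in> F\<close>])
  fix a assume a: "a \<in> I"
  then have "a \<in> carrier R" using gabriel_filter_subset_carrier[OF G \<open>I \<in> F\<close>] by blast
  moreover have "K \<subseteq> ideal_colon R J a"
    using prod a gabriel_filter_subset_carrier[OF G \<open>K \<in> F\<close>] by (auto simp: ideal_colon_def)
  ultimately show "ideal_colon R J a \<in> F"
    using gabriel_filter_upward_closed[OF G \<open>K \<in> F\<close>] ideal_colon_ideal[OF \<open>cring R\<close> J] by blast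
qed

section \<open>Totally torsion and totally simple modules\<close>

lemma module_ideal_prod_generator: "k \<in> K \<Longrightarrow> x \<in> X \<Longrightarrow> k \<odot>\<^bsub>M\<^esub> x \<in> module_ideal_prod R M X K"
  unfolding module_ideal_prod_def by blast

lemma module_ideal_prod_subset_iff:
  "submodule H R M \<Longrightarrow> module_ideal_prod R M X K \<subseteq> H \<longleftrightarrow> (\<forall>k\<in>K. \<forall>x\<in>X. k \<odot>\<^bsub>M\<^esub> x \<in> H)"
  unfolding module_ideal_prod_def by blast

lemma submodule_zero_closed: "submodule N R M \<Longrightarrow> \<zero>\<^bsub>M\<^esub> \<in> N"
  using subgroup.one_closed[OF submodule.axioms(1)] by fastforce

lemma (in module) zero_submodule: "submodule {\<zero>\<^bsub>M\<^esub>} R M"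
  by (rule submoduleI) simp_all

lemma (in module) submodule_iff_closed:
  "submodule H R M \<longleftrightarrow> H \<subseteq> carrier M \<and> \<zero>\<^bsub>M\<^esub> \<in> H \<and>
     (\<forall>a\<in>H. \<forall>b\<in>H. a \<oplus>\<^bsub>M\<^esub> b \<in> H) \<and> (\<forall>r\<in>carrier R. \<forall>a\<in>H. r \<odot>\<^bsub>M\<^esub> a \<in> H)"
  (is "_ \<longleftrightarrow> ?closed")
proof
  assume "submodule H R M"
  then show ?closed using submoduleE(1,4,5) submodule_zero_closed by metis
next
  assume H: ?closed
  show "submodule H R M"
  proof (rule submoduleI)
    fix a assume a: "a \<in> H"
    then have "\<ominus>\<^bsub>M\<^esub> a = (\<ominus>\<^bsub>R\<^esub> \<one>\<^bsub>R\<^esub>) \<odot>\<^bsub>M\<^esub> a"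
      using H smult_l_minus[of "\<one>\<^bsub>R\<^esub>" a] by auto
    then show "\<ominus>\<^bsub>M\<^esub> a \<in> H" using H a by simp
  qed (use H in auto)
qed

lemma totally_torsion_iff:
  assumes "module R M"
  shows "totally_torsion R F M X \<longleftrightarrow> (\<exists>K\<in>F. \<forall>k\<in>K. \<forall>x\<in>X. k \<odot>\<^bsub>M\<^esub> x = \<zero>\<^bsub>M\<^esub>)"
proof -
  have "module_ideal_prod R M X K = {\<zero>\<^bsub>M\<^esub>} \<longleftrightarrow> (\<forall>k\<in>K. \<forall>x\<in>X. k \<odot>\<^bsub>M\<^esub> x = \<zero>\<^bsub>M\<^esub>)" for K
  proof -
    have "\<zero>\<^bsub>M\<^esub> \<in> module_ideal_prod R M X K"
      unfolding module_ideal_prod_def using submodule_zero_closed by blast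
    then show ?thesis
      using module_ideal_prod_subset_iff[OF module.zero_submodule[OF assms], of X K] by blast
  qed
  then show ?thesis unfolding totally_torsion_def by simp
qed

lemma totally_torsion_subset:
  assumes "module R M" and "X \<subseteq> Y" and "totally_torsion R F M Y"
  shows "totally_torsion R F M X"
  using assms(2,3) unfolding totally_torsion_iff[OF assms(1)] by blast

lemma totally_simple_iff:
  "totally_simple R F M \<longleftrightarrow> \<not> totally_torsion R F M (carrier M) \<and>
    (\<exists>h\<in>F. \<forall>H. submodule H R M \<and> \<not> totally_torsion R F M H \<longrightarrow> (\<forall>k\<in>h. \<forall>x\<in>carrier M. k \<odot>\<^bsub>M\<^esub> x \<in> H))"
  unfolding totally_simple_def by (simp add: module_ideal_prod_subset_iff)

definition module_colon ::
  "('a, 'c) ring_scheme \<Rightarrow> ('a, 'b, 'd) module_scheme \<Rightarrow> 'b set \<Rightarrow> 'b set \<Rightarrow> 'a set"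
  where "module_colon R M X H = {r \<in> carrier R. \<forall>x\<in>X. r \<odot>\<^bsub>M\<^esub> x \<in> H}"

lemma module_colon_InterI:
  "r \<in> carrier R \<Longrightarrow> (\<And>x H. x \<in> X \<Longrightarrow> H \<in> S \<Longrightarrow> r \<odot>\<^bsub>M\<^esub> x \<in> H) \<Longrightarrow> r \<in> module_colon R M X (\<Inter>S)"
  unfolding module_colon_def by blast

lemma module_colon_InterD:
  "r \<in> module_colon R M X (\<Inter>S) \<Longrightarrow> x \<in> X \<Longrightarrow> H \<in> S \<Longrightarrow> r \<odot>\<^bsub>M\<^esub> x \<in> H"
  unfolding module_colon_def by blast

lemma module_colon_closed:
  assumes "module R M" and X: "X \<subseteq> carrier M" "\<And>r x. r \<in> carrier R \<Longrightarrow> x \<in> X \<Longrightarrow> r \<odot>\<^bsub>M\<^esub> x \<in> X"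
    and S: "\<And>H. H \<in> S \<Longrightarrow> submodule H R M" and a: "a \<in> module_colon R M X (\<Inter>S)"
  shows "b \<in> module_colon R M X (\<Inter>S) \<Longrightarrow> a \<oplus>\<^bsub>R\<^esub> b \<in> module_colon R M X (\<Inter>S)"
    and "r \<in> carrier R \<Longrightarrow> r \<otimes>\<^bsub>R\<^esub> a \<in> module_colon R M X (\<Inter>S)"
    and "r \<in> carrier R \<Longrightarrow> a \<otimes>\<^bsub>R\<^esub> r \<in> module_colon R M X (\<Inter>S)"
proof -
  interpret module R M by fact
  have "a \<in> carrier R" using a by (simp add: module_colon_def)
  show "a \<oplus>\<^bsub>R\<^esub> b \<in> module_colon R M X (\<Inter>S)" if b: "b \<in> module_colon R M X (\<Inter>S)"
  proof (rule module_colon_InterI)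
    have "b \<in> carrier R" using b by (simp add: module_colon_def)
    then show "a \<oplus>\<^bsub>R\<^esub> b \<in> carrier R" using \<open>a \<in> carrier R\<close> by simp
    fix x H assume "x \<in> X" "H \<in> S"
    then have "(a \<oplus>\<^bsub>R\<^esub> b) \<odot>\<^bsub>M\<^esub> x = a \<odot>\<^bsub>M\<^esub> x \<oplus>\<^bsub>M\<^esub> b \<odot>\<^bsub>M\<^esub> x"
      using \<open>a \<in> carrier R\<close> \<open>b \<in> carrier R\<close> X(1) by (auto simp: smult_l_distr)
    then show "(a \<oplus>\<^bsub>R\<^esub> b) \<odot>\<^bsub>M\<^esub> x \<in> H"
      using submoduleE(5)[OF S] module_colon_InterD[OF a] module_colon_InterD[OF b] \<open>x \<in> X\<close> \<open>H \<in> S\<close>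
      by metis
  qed
  show "r \<otimes>\<^bsub>R\<^esub> a \<in> module_colon R M X (\<Inter>S)" if r: "r \<in> carrier R"
  proof (rule module_colon_InterI)
    show "r \<otimes>\<^bsub>R\<^esub> a \<in> carrier R" using r \<open>a \<in> carrier R\<close> by simp
    fix x H assume "x \<in> X" "H \<in> S"
    then have "(r \<otimes>\<^bsub>R\<^esub> a) \<odot>\<^bsub>M\<^esub> x = r \<odot>\<^bsub>M\<^esub> (a \<odot>\<^bsub>M\<^esub> x)"
      using r \<open>a \<in> carrier R\<close> X(1) by (auto simp: smult_assoc1)
    then show "(r \<otimes>\<^bsub>R\<^esub> a) \<odot>\<^bsub>M\<^esub> x \<in> H"
      using submoduleE(4)[OF S[OF \<open>H \<in> S\<close>] r module_colon_InterD[OF a \<open>x \<in> X\<close> \<open>H \<in> S\<close>]] by simp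
  qed
  show "a \<otimes>\<^bsub>R\<^esub> r \<in> module_colon R M X (\<Inter>S)" if r: "r \<in> carrier R"
  proof (rule module_colon_InterI)
    show "a \<otimes>\<^bsub>R\<^esub> r \<in> carrier R" using r \<open>a \<in> carrier R\<close> by simp
    fix x H assume "x \<in> X" "H \<in> S"
    then have "(a \<otimes>\<^bsub>R\<^esub> r) \<odot>\<^bsub>M\<^esub> x = a \<odot>\<^bsub>M\<^esub> (r \<odot>\<^bsub>M\<^esub> x)"
      using r \<open>a \<in> carrier R\<close> X(1) by (auto simp: smult_assoc1)
    then show "(a \<otimes>\<^bsub>R\<^esub> r) \<odot>\<^bsub>M\<^esub> x \<in> H"
      using module_colon_InterD[OF a X(2)[OF r \<open>x \<in> X\<close>] \<open>H \<in> S\<close>] by simp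
  qed
qed

lemma ideal_module_colon:
  assumes M: "module R M" and X: "X \<subseteq> carrier M" "\<And>r x. r \<in> carrier R \<Longrightarrow> x \<in> X \<Longrightarrow> r \<odot>\<^bsub>M\<^esub> x \<in> X"
    and S: "\<And>H. H \<in> S \<Longrightarrow> submodule H R M"
  shows "ideal (module_colon R M X (\<Inter>S)) R"
proof -
  interpret module R M by fact
  show ?thesis
  proof (rule idealI[OF R.ring_axioms R.add.subgroupI])
    have "\<zero>\<^bsub>R\<^esub> \<in> module_colon R M X (\<Inter>S)"
      using X(1) submodule_zero_closed[OF S] by (intro module_colon_InterI) auto
    then show "module_colon R M X (\<Inter>S) \<noteq> {}" by blast
  next
    fix a assume a: "a \<in> module_colon R M X (\<Inter>S)"
    then have "a \<in> carrier R" by (simp add: module_colon_def)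
    have "(\<ominus>\<^bsub>R\<^esub> \<one>\<^bsub>R\<^esub>) \<otimes>\<^bsub>R\<^esub> a \<in> module_colon R M X (\<Inter>S)" using module_colon_closed(2)[OF M X S a] by simp
    then show "\<ominus>\<^bsub>R\<^esub> a \<in> module_colon R M X (\<Inter>S)"
      using \<open>a \<in> carrier R\<close> by (simp add: R.l_minus)
  next
    show "module_colon R M X (\<Inter>S) \<subseteq> carrier R" by (auto simp: module_colon_def)
  qed (blast intro: module_colon_closed[OF M X S])+
qed

lemma gabriel_filter_uniform_multiple:
  assumes "cring R" and G: "gabriel_filter R F" and M: "module R M"
    and X: "X \<subseteq> carrier M" "\<And>r x. r \<in> carrier R \<Longrightarrow> x \<in> X \<Longrightarrow> r \<odot>\<^bsub>M\<^esub> x \<in> X"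
    and S: "\<And>H. H \<in> S \<Longrightarrow> submodule H R M" and "I \<in> F" "K \<in> F"
    and multiple: "\<And>H a b x. H \<in> S \<Longrightarrow> a \<in> I \<Longrightarrow> b \<in> K \<Longrightarrow> x \<in> X \<Longrightarrow> b \<odot>\<^bsub>M\<^esub> (a \<odot>\<^bsub>M\<^esub> x) \<in> H"
  shows "\<exists>J\<in>F. \<forall>H\<in>S. \<forall>k\<in>J. \<forall>x\<in>X. k \<odot>\<^bsub>M\<^esub> x \<in> H"
proof -
  interpret module R M by fact
  have "module_colon R M X (\<Inter>S) \<in> F"
  proof (rule gabriel_filter_of_products[OF \<open>cring R\<close> G ideal_module_colon[OF M X S] \<open>I \<in> F\<close> \<open>K \<in> F\<close>])
    fix a b assume a: "a \<in> I" and b: "b \<in> K"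
    have ac: "a \<in> carrier R" and bc: "b \<in> carrier R"
      using a b gabriel_filter_subset_carrier[OF G] \<open>I \<in> F\<close> \<open>K \<in> F\<close> by blast+
    have "(b \<otimes>\<^bsub>R\<^esub> a) \<odot>\<^bsub>M\<^esub> x \<in> \<Inter>S" if x: "x \<in> X" for x
    proof -
      have "(b \<otimes>\<^bsub>R\<^esub> a) \<odot>\<^bsub>M\<^esub> x = b \<odot>\<^bsub>M\<^esub> (a \<odot>\<^bsub>M\<^esub> x)"
        using subsetD[OF X(1) x] ac bc by (simp add: smult_assoc1)
      then show ?thesis using multiple[OF _ a b x] by simp
    qed
    then show "b \<otimes>\<^bsub>R\<^esub> a \<in> module_colon R M X (\<Inter>S)"
      using ac bc by (simp add: module_colon_def)
  qed
  moreover have "k \<odot>\<^bsub>M\<^esub> x \<in> H" if "k \<in> module_colon R M X (\<Inter>S)" "H \<in> S" "x \<in> X" for H k x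
    using that unfolding module_colon_def by blast
  ultimately show ?thesis by blast
qed

lemma totally_torsion_extension:
  assumes "cring R" and G: "gabriel_filter R F" and M: "module R M" and X: "submodule X R M"
    and "totally_torsion R F M Y" and "K \<in> F" and KX: "\<And>k x. k \<in> K \<Longrightarrow> x \<in> X \<Longrightarrow> k \<odot>\<^bsub>M\<^esub> x \<in> Y"
  shows "totally_torsion R F M X"
proof -
  interpret module R M by fact
  obtain K0 where "K0 \<in> F" and K0: "\<And>b y. b \<in> K0 \<Longrightarrow> y \<in> Y \<Longrightarrow> b \<odot>\<^bsub>M\<^esub> y = \<zero>\<^bsub>M\<^esub>"
    using \<open>totally_torsion R F M Y\<close> unfolding totally_torsion_iff[OF M] by blast
  have "\<exists>J\<in>F. \<forall>H\<in>{{\<zero>\<^bsub>M\<^esub>}}. \<forall>k\<in>J. \<forall>x\<in>X. k \<odot>\<^bsub>M\<^esub> x \<in> H"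
  proof (rule gabriel_filter_uniform_multiple[OF \<open>cring R\<close> G M submoduleE(1,4)[OF X] _ \<open>K \<in> F\<close> \<open>K0 \<in> F\<close>])
    show "\<And>H. H \<in> {{\<zero>\<^bsub>M\<^esub>}} \<Longrightarrow> submodule H R M" using zero_submodule by simp
    show "\<And>H a b x. H \<in> {{\<zero>\<^bsub>M\<^esub>}} \<Longrightarrow> a \<in> K \<Longrightarrow> b \<in> K0 \<Longrightarrow> x \<in> X \<Longrightarrow> b \<odot>\<^bsub>M\<^esub> (a \<odot>\<^bsub>M\<^esub> x) \<in> H"
      using K0[OF _ KX] by simp
  qed
  then show ?thesis unfolding totally_torsion_iff[OF M] by simp
qed

lemma (in module) submodule_Int:
  assumes "submodule H R M" and "submodule N R M"
  shows "submodule (H \<inter> N) R M"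
  using assms unfolding submodule_iff_closed by (simp add: le_infI1)

section \<open>Submodules containing a multiple of the module\<close>

lemma totally_simple_carrier_update_iff:
  assumes M: "module R M" and N: "submodule N R M"
  shows "totally_simple R F (M\<lparr>carrier := N\<rparr>) \<longleftrightarrow> \<not> totally_torsion R F M N \<and>
    (\<exists>h\<in>F. \<forall>H. submodule H R M \<and> H \<subseteq> N \<and> \<not> totally_torsion R F M H \<longrightarrow> (\<forall>k\<in>h. \<forall>x\<in>N. k \<odot>\<^bsub>M\<^esub> x \<in> H))"
proof -
  interpret module R M by fact
  have MN: "module R (M\<lparr>carrier := N\<rparr>)" using submodule.submodule_is_module[OF N M] .
  have "submodule H R (M\<lparr>carrier := N\<rparr>) \<longleftrightarrow> submodule H R M \<and> H \<subseteq> N" for H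
    unfolding module.submodule_iff_closed[OF MN] submodule_iff_closed
    using submoduleE(1)[OF N] by simp blast
  moreover have "totally_torsion R F (M\<lparr>carrier := N\<rparr>) X \<longleftrightarrow> totally_torsion R F M X" for X
    unfolding totally_torsion_iff[OF MN] totally_torsion_iff[OF M] by simp
  ultimately show ?thesis
    unfolding totally_simple_iff[of R F "M\<lparr>carrier := N\<rparr>"] by (simp add: conj_assoc)
qed

lemma totally_torsion_of_Int:
  assumes "cring R" and G: "gabriel_filter R F" and M: "module R M" and H: "submodule H R M"
    and "h0 \<in> F" and h0N: "\<And>a x. a \<in> h0 \<Longrightarrow> x \<in> carrier M \<Longrightarrow> a \<odot>\<^bsub>M\<^esub> x \<in> N"
    and "totally_torsion R F M (H \<inter> N)"
  shows "totally_torsion R F M H"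
proof (rule totally_torsion_extension[OF \<open>cring R\<close> G M H \<open>totally_torsion R F M (H \<inter> N)\<close> \<open>h0 \<in> F\<close>])
  interpret module R M by fact
  fix a x assume "a \<in> h0" "x \<in> H"
  moreover have "a \<in> carrier R" "x \<in> carrier M"
    using gabriel_filter_subset_carrier[OF G \<open>h0 \<in> F\<close>] submoduleE(1)[OF H] calculation by blast+
  ultimately show "a \<odot>\<^bsub>M\<^esub> x \<in> H \<inter> N" using h0N submoduleE(4)[OF H] by blast
qed

lemma totally_simple_submodule_iff:
  fixes M :: "('a, 'e) module"
  assumes "cring R" and G: "gabriel_filter R F" and M: "module R M"
    and N: "submodule N R M" and "h0 \<in> F" and "module_ideal_prod R M (carrier M) h0 \<subseteq> N"
  shows "totally_simple R F (M\<lparr>carrier := N\<rparr>) \<longleftrightarrow> totally_simple R F M"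
proof -
  interpret module R M by fact
  have "N \<subseteq> carrier M" using submoduleE(1)[OF N] .
  have h0N: "a \<odot>\<^bsub>M\<^esub> x \<in> N" if "a \<in> h0" "x \<in> carrier M" for a x
    using assms(6) module_ideal_prod_generator[OF that] by blast
  note torsion_of_Int = totally_torsion_of_Int[OF \<open>cring R\<close> G M _ \<open>h0 \<in> F\<close> h0N]
  show ?thesis
    unfolding totally_simple_carrier_update_iff[OF M N]
  proof
    assume "\<not> totally_torsion R F M N \<and>
      (\<exists>h\<in>F. \<forall>H. submodule H R M \<and> H \<subseteq> N \<and> \<not> totally_torsion R F M H \<longrightarrow> (\<forall>k\<in>h. \<forall>x\<in>N. k \<odot>\<^bsub>M\<^esub> x \<in> H))"
    then obtain h where "h \<in> F" and "\<not> totally_torsion R F M N"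
      and h: "\<forall>H. submodule H R M \<and> H \<subseteq> N \<and> \<not> totally_torsion R F M H \<longrightarrow> (\<forall>k\<in>h. \<forall>x\<in>N. k \<odot>\<^bsub>M\<^esub> x \<in> H)"
      by blast
    define S where "S = {H. submodule H R M \<and> \<not> totally_torsion R F M H}"
    have "\<exists>J\<in>F. \<forall>H\<in>S. \<forall>k\<in>J. \<forall>x\<in>carrier M. k \<odot>\<^bsub>M\<^esub> x \<in> H"
    proof (rule gabriel_filter_uniform_multiple[OF \<open>cring R\<close> G M _ _ _ \<open>h0 \<in> F\<close> \<open>h \<in> F\<close>])
      fix H a b x assume "H \<in> S" "a \<in> h0" "b \<in> h" "x \<in> carrier M"
      then have "submodule (H \<inter> N) R M" "\<not> totally_torsion R F M (H \<inter> N)"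
        using submodule_Int[OF _ N] torsion_of_Int unfolding S_def by auto
      then show "b \<odot>\<^bsub>M\<^esub> (a \<odot>\<^bsub>M\<^esub> x) \<in> H"
        using h \<open>b \<in> h\<close> h0N[OF \<open>a \<in> h0\<close> \<open>x \<in> carrier M\<close>] by blast
    qed (auto simp: S_def)
    moreover have "\<not> totally_torsion R F M (carrier M)"
      using totally_torsion_subset[OF M \<open>N \<subseteq> carrier M\<close>] \<open>\<not> totally_torsion R F M N\<close> by blast
    ultimately show "totally_simple R F M"
      unfolding totally_simple_iff S_def by blast
  next
    assume "totally_simple R F M"
    then obtain h where "h \<in> F" and "\<not> totally_torsion R F M (carrier M)"
      and h: "\<forall>H. submodule H R M \<and> \<not> totally_torsion R F M H \<longrightarrow> (\<forall>k\<in>h. \<forall>x\<in>carrier M. k \<odot>\<^bsub>M\<^esub> x \<in> H)"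
      unfolding totally_simple_iff by blast
    have "\<not> totally_torsion R F M N"
      using torsion_of_Int[OF carrier_is_submodule] Int_absorb1[OF \<open>N \<subseteq> carrier M\<close>]
        \<open>\<not> totally_torsion R F M (carrier M)\<close> by auto
    moreover have "\<forall>H. submodule H R M \<and> H \<subseteq> N \<and> \<not> totally_torsion R F M H \<longrightarrow> (\<forall>k\<in>h. \<forall>x\<in>N. k \<odot>\<^bsub>M\<^esub> x \<in> H)"
      using h \<open>N \<subseteq> carrier M\<close> by blast
    ultimately show "\<not> totally_torsion R F M N \<and>
      (\<exists>h\<in>F. \<forall>H. submodule H R M \<and> H \<subseteq> N \<and> \<not> totally_torsion R F M H \<longrightarrow> (\<forall>k\<in>h. \<forall>x\<in>N. k \<odot>\<^bsub>M\<^esub> x \<in> H))"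
      using \<open>h \<in> F\<close> by blast
  qed
qed

section \<open>Quotients by a totally torsion submodule\<close>

locale submodule_quotient = module R M for R and M :: "('a, 'b) module" +
  fixes L assumes submodule_L: "submodule L R M"
begin

sublocale L: abelian_subgroup L M
  by (rule abelian_subgroupI3[OF additive_subgroup.intro[OF submodule.axioms(1)[OF submodule_L]]])
     (rule abelian_group_axioms)

abbreviation Q where "Q \<equiv> quot_module R M L"

lemma quotient_carrier: "carrier Q = (\<lambda>x. L +>\<^bsub>M\<^esub> x) ` carrier M"
  unfolding quot_module_def A_RCOSETS_def RCOSETS_def a_r_coset_def by auto

lemma quotient_zero: "\<zero>\<^bsub>Q\<^esub> = L"
  by (simp add: quot_module_def)

lemma coset_in_quotient: "x \<in> carrier M \<Longrightarrow> L +>\<^bsub>M\<^esub> x \<in> carrier Q"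
  unfolding quotient_carrier by blast

lemma quotient_cases:
  assumes "C \<in> carrier Q" obtains x where "x \<in> carrier M" "C = L +>\<^bsub>M\<^esub> x"
  using assms unfolding quotient_carrier by blast

lemma quotient_add_coset:
  "x \<in> carrier M \<Longrightarrow> y \<in> carrier M \<Longrightarrow> (L +>\<^bsub>M\<^esub> x) \<oplus>\<^bsub>Q\<^esub> (L +>\<^bsub>M\<^esub> y) = L +>\<^bsub>M\<^esub> (x \<oplus>\<^bsub>M\<^esub> y)"
  unfolding quot_module_def by (simp add: L.a_rcos_sum)

lemma coset_zero: "L +>\<^bsub>M\<^esub> \<zero>\<^bsub>M\<^esub> = L"
  using submoduleE(1)[OF submodule_L] by simp

lemma coset_eq_L_iff: "x \<in> carrier M \<Longrightarrow> L +>\<^bsub>M\<^esub> x = L \<longleftrightarrow> x \<in> L"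
  using L.a_rcos_const L.a_rcos_self by metis

lemma coset_eq_iff:
  "x \<in> carrier M \<Longrightarrow> y \<in> carrier M \<Longrightarrow> L +>\<^bsub>M\<^esub> y = L +>\<^bsub>M\<^esub> x \<longleftrightarrow> y \<oplus>\<^bsub>M\<^esub> \<ominus>\<^bsub>M\<^esub> x \<in> L"
  using L.a_repr_independence' L.a_rcos_self L.a_rcos_module by metis

text \<open>The scalar action of \<open>quot_module\<close> multiplies a \<open>SOME\<close>-chosen representative of the
  coset; it does not depend on that choice.\<close>

lemma quotient_smult_coset:
  assumes r: "r \<in> carrier R" and x: "x \<in> carrier M"
  shows "r \<odot>\<^bsub>Q\<^esub> (L +>\<^bsub>M\<^esub> x) = L +>\<^bsub>M\<^esub> (r \<odot>\<^bsub>M\<^esub> x)"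
proof -
  define y where "y = (SOME y. y \<in> L +>\<^bsub>M\<^esub> x)"
  have "y \<in> L +>\<^bsub>M\<^esub> x"
    unfolding y_def using L.a_rcos_self[OF x] by (rule someI)
  then have y: "y \<in> carrier M" "L +>\<^bsub>M\<^esub> y = L +>\<^bsub>M\<^esub> x"
    using L.a_elemrcos_carrier[OF x] L.a_repr_independence'[OF _ x] by auto
  then have "y \<oplus>\<^bsub>M\<^esub> \<ominus>\<^bsub>M\<^esub> x \<in> L" using coset_eq_iff x by blast
  then have "r \<odot>\<^bsub>M\<^esub> (y \<oplus>\<^bsub>M\<^esub> \<ominus>\<^bsub>M\<^esub> x) \<in> L" using submoduleE(4)[OF submodule_L r] by blast
  moreover have "r \<odot>\<^bsub>M\<^esub> (y \<oplus>\<^bsub>M\<^esub> \<ominus>\<^bsub>M\<^esub> x) = r \<odot>\<^bsub>M\<^esub> y \<oplus>\<^bsub>M\<^esub> \<ominus>\<^bsub>M\<^esub> (r \<odot>\<^bsub>M\<^esub> x)"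
    using r x y(1) by (simp add: smult_r_distr smult_r_minus)
  ultimately have "L +>\<^bsub>M\<^esub> (r \<odot>\<^bsub>M\<^esub> y) = L +>\<^bsub>M\<^esub> (r \<odot>\<^bsub>M\<^esub> x)"
    using coset_eq_iff r x y(1) by simp
  then show ?thesis unfolding y_def by (simp add: quot_module_def)
qed

lemma quotient_smult_eq_zero_iff:
  "r \<in> carrier R \<Longrightarrow> x \<in> carrier M \<Longrightarrow> r \<odot>\<^bsub>Q\<^esub> (L +>\<^bsub>M\<^esub> x) = \<zero>\<^bsub>Q\<^esub> \<longleftrightarrow> r \<odot>\<^bsub>M\<^esub> x \<in> L"
  by (simp add: quotient_smult_coset quotient_zero coset_eq_L_iff)

lemma quotient_abelian_group: "abelian_group Q"
proof (rule abelian_groupI)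
  fix C D assume "C \<in> carrier Q" "D \<in> carrier Q"
  then show "C \<oplus>\<^bsub>Q\<^esub> D \<in> carrier Q"
    by (metis quotient_cases quotient_add_coset coset_in_quotient M.add.m_closed)
next
  show "\<zero>\<^bsub>Q\<^esub> \<in> carrier Q" using coset_in_quotient[of "\<zero>\<^bsub>M\<^esub>"] coset_zero quotient_zero by simp
next
  fix C D E assume "C \<in> carrier Q" "D \<in> carrier Q" "E \<in> carrier Q"
  then show "C \<oplus>\<^bsub>Q\<^esub> D \<oplus>\<^bsub>Q\<^esub> E = C \<oplus>\<^bsub>Q\<^esub> (D \<oplus>\<^bsub>Q\<^esub> E)"
    by (elim quotient_cases) (simp add: quotient_add_coset M.add.m_assoc)
next
  fix C D assume "C \<in> carrier Q" "D \<in> carrier Q"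
  then show "C \<oplus>\<^bsub>Q\<^esub> D = D \<oplus>\<^bsub>Q\<^esub> C"
    by (elim quotient_cases) (simp add: quotient_add_coset M.add.m_comm)
next
  fix C assume "C \<in> carrier Q"
  then show "\<zero>\<^bsub>Q\<^esub> \<oplus>\<^bsub>Q\<^esub> C = C"
    by (elim quotient_cases) (metis quotient_add_coset coset_zero quotient_zero M.l_zero M.zero_closed)
next
  fix C assume "C \<in> carrier Q"
  then obtain x where x: "x \<in> carrier M" "C = L +>\<^bsub>M\<^esub> x" by (rule quotient_cases)
  then have "(L +>\<^bsub>M\<^esub> \<ominus>\<^bsub>M\<^esub> x) \<oplus>\<^bsub>Q\<^esub> C = \<zero>\<^bsub>Q\<^esub>"
    using quotient_add_coset[of "\<ominus>\<^bsub>M\<^esub> x" x] coset_zero quotient_zero by (simp add: M.l_neg)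
  then show "\<exists>D\<in>carrier Q. D \<oplus>\<^bsub>Q\<^esub> C = \<zero>\<^bsub>Q\<^esub>" using coset_in_quotient[of "\<ominus>\<^bsub>M\<^esub> x"] x by blast
qed

lemma quotient_module: "module R Q"
proof (rule moduleI)
  show "cring R" by (rule R.is_cring)
  show "abelian_group Q" by (rule quotient_abelian_group)
next
  fix a C assume "a \<in> carrier R" "C \<in> carrier Q"
  then show "a \<odot>\<^bsub>Q\<^esub> C \<in> carrier Q"
    by (elim quotient_cases) (simp add: quotient_smult_coset coset_in_quotient)
next
  fix a b C assume "a \<in> carrier R" "b \<in> carrier R" "C \<in> carrier Q"
  then show "(a \<oplus>\<^bsub>R\<^esub> b) \<odot>\<^bsub>Q\<^esub> C = a \<odot>\<^bsub>Q\<^esub> C \<oplus>\<^bsub>Q\<^esub> b \<odot>\<^bsub>Q\<^esub> C"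
    by (elim quotient_cases) (simp add: quotient_smult_coset quotient_add_coset smult_l_distr)
next
  fix a C D assume "a \<in> carrier R" "C \<in> carrier Q" "D \<in> carrier Q"
  then show "a \<odot>\<^bsub>Q\<^esub> (C \<oplus>\<^bsub>Q\<^esub> D) = a \<odot>\<^bsub>Q\<^esub> C \<oplus>\<^bsub>Q\<^esub> a \<odot>\<^bsub>Q\<^esub> D"
    by (elim quotient_cases) (simp add: quotient_smult_coset quotient_add_coset smult_r_distr)
next
  fix a b C assume "a \<in> carrier R" "b \<in> carrier R" "C \<in> carrier Q"
  then show "(a \<otimes>\<^bsub>R\<^esub> b) \<odot>\<^bsub>Q\<^esub> C = a \<odot>\<^bsub>Q\<^esub> (b \<odot>\<^bsub>Q\<^esub> C)"
    by (elim quotient_cases) (simp add: quotient_smult_coset smult_assoc1)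
next
  fix C assume "C \<in> carrier Q"
  then show "\<one>\<^bsub>R\<^esub> \<odot>\<^bsub>Q\<^esub> C = C"
    by (elim quotient_cases) (simp add: quotient_smult_coset)
qed

lemma submodule_quotient_preimage:
  assumes "submodule Hb R Q"
  shows "submodule {x \<in> carrier M. L +>\<^bsub>M\<^esub> x \<in> Hb} R M"
proof -
  note Hb = assms[unfolded module.submodule_iff_closed[OF quotient_module]]
  show ?thesis
    unfolding submodule_iff_closed
  proof (intro conjI ballI)
    show "\<zero>\<^bsub>M\<^esub> \<in> {x \<in> carrier M. L +>\<^bsub>M\<^esub> x \<in> Hb}"
      using Hb coset_zero quotient_zero by simp
  next
    fix x y assume "x \<in> {x \<in> carrier M. L +>\<^bsub>M\<^esub> x \<in> Hb}" "y \<in> {x \<in> carrier M. L +>\<^bsub>M\<^esub> x \<in> Hb}"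
    then have "x \<in> carrier M" "y \<in> carrier M" "(L +>\<^bsub>M\<^esub> x) \<oplus>\<^bsub>Q\<^esub> (L +>\<^bsub>M\<^esub> y) \<in> Hb"
      using Hb by simp_all
    then show "x \<oplus>\<^bsub>M\<^esub> y \<in> {x \<in> carrier M. L +>\<^bsub>M\<^esub> x \<in> Hb}"
      by (simp add: quotient_add_coset)
  next
    fix r x assume "r \<in> carrier R" "x \<in> {x \<in> carrier M. L +>\<^bsub>M\<^esub> x \<in> Hb}"
    then have "x \<in> carrier M" "r \<odot>\<^bsub>Q\<^esub> (L +>\<^bsub>M\<^esub> x) \<in> Hb"
      using Hb by simp_all
    then show "r \<odot>\<^bsub>M\<^esub> x \<in> {x \<in> carrier M. L +>\<^bsub>M\<^esub> x \<in> Hb}"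
      using \<open>r \<in> carrier R\<close> by (simp add: quotient_smult_coset)
  qed auto
qed

lemma submodule_quotient_image:
  assumes H: "submodule H R M"
  shows "submodule ((\<lambda>x. L +>\<^bsub>M\<^esub> x) ` H) R Q"
  unfolding module.submodule_iff_closed[OF quotient_module]
proof (intro conjI ballI)
  have "H \<subseteq> carrier M" using submoduleE(1)[OF H] .
  then show "(\<lambda>x. L +>\<^bsub>M\<^esub> x) ` H \<subseteq> carrier Q" using coset_in_quotient by blast
  have "\<zero>\<^bsub>Q\<^esub> = L +>\<^bsub>M\<^esub> \<zero>\<^bsub>M\<^esub>" by (simp add: coset_zero quotient_zero)
  then show "\<zero>\<^bsub>Q\<^esub> \<in> (\<lambda>x. L +>\<^bsub>M\<^esub> x) ` H" using submodule_zero_closed[OF H] by (rule image_eqI)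
next
  fix C D assume "C \<in> (\<lambda>x. L +>\<^bsub>M\<^esub> x) ` H" "D \<in> (\<lambda>x. L +>\<^bsub>M\<^esub> x) ` H"
  then obtain x y where "x \<in> H" "y \<in> H" "C = L +>\<^bsub>M\<^esub> x" "D = L +>\<^bsub>M\<^esub> y" by blast
  moreover have "x \<oplus>\<^bsub>M\<^esub> y \<in> H" using submoduleE(5)[OF H \<open>x \<in> H\<close> \<open>y \<in> H\<close>] .
  moreover have "x \<in> carrier M" "y \<in> carrier M" using calculation submoduleE(1)[OF H] by blast+
  ultimately show "C \<oplus>\<^bsub>Q\<^esub> D \<in> (\<lambda>x. L +>\<^bsub>M\<^esub> x) ` H"
    by (simp add: quotient_add_coset)
next
  fix r C assume "r \<in> carrier R" "C \<in> (\<lambda>x. L +>\<^bsub>M\<^esub> x) ` H"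
  then obtain x where "x \<in> H" "C = L +>\<^bsub>M\<^esub> x" by blast
  moreover have "r \<odot>\<^bsub>M\<^esub> x \<in> H" using submoduleE(4)[OF H \<open>r \<in> carrier R\<close> \<open>x \<in> H\<close>] .
  moreover have "x \<in> carrier M" using \<open>x \<in> H\<close> submoduleE(1)[OF H] by blast
  ultimately show "r \<odot>\<^bsub>Q\<^esub> C \<in> (\<lambda>x. L +>\<^bsub>M\<^esub> x) ` H"
    using \<open>r \<in> carrier R\<close> by (simp add: quotient_smult_coset)
qed

lemma image_quotient_preimage:
  assumes "Hb \<subseteq> carrier Q"
  shows "(\<lambda>x. L +>\<^bsub>M\<^esub> x) ` {x \<in> carrier M. L +>\<^bsub>M\<^esub> x \<in> Hb} = Hb"
proof
  show "Hb \<subseteq> (\<lambda>x. L +>\<^bsub>M\<^esub> x) ` {x \<in> carrier M. L +>\<^bsub>M\<^esub> x \<in> Hb}"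
  proof
    fix C assume "C \<in> Hb"
    then obtain x where "x \<in> carrier M" "C = L +>\<^bsub>M\<^esub> x"
      using assms quotient_cases by blast
    with \<open>C \<in> Hb\<close> show "C \<in> (\<lambda>x. L +>\<^bsub>M\<^esub> x) ` {x \<in> carrier M. L +>\<^bsub>M\<^esub> x \<in> Hb}" by blast
  qed
qed blast

lemma totally_torsion_quotient_image_iff:
  assumes G: "gabriel_filter R F" and "totally_torsion R F M L" and X: "submodule X R M"
  shows "totally_torsion R F Q ((\<lambda>x. L +>\<^bsub>M\<^esub> x) ` X) \<longleftrightarrow> totally_torsion R F M X"
proof -
  have Xc: "\<And>x. x \<in> X \<Longrightarrow> x \<in> carrier M" using submoduleE(1)[OF X] by blast
  have pointwise: "(\<forall>C\<in>(\<lambda>x. L +>\<^bsub>M\<^esub> x) ` X. k \<odot>\<^bsub>Q\<^esub> C = \<zero>\<^bsub>Q\<^esub>) \<longleftrightarrow> (\<forall>x\<in>X. k \<odot>\<^bsub>M\<^esub> x \<in> L)"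
    if "k \<in> carrier R" for k
    using quotient_smult_eq_zero_iff[OF that] Xc by blast
  have image_iff:
    "totally_torsion R F Q ((\<lambda>x. L +>\<^bsub>M\<^esub> x) ` X) \<longleftrightarrow> (\<exists>K\<in>F. \<forall>k\<in>K. \<forall>x\<in>X. k \<odot>\<^bsub>M\<^esub> x \<in> L)"
    unfolding totally_torsion_iff[OF quotient_module]
    by (intro bex_cong ball_cong refl) (use pointwise gabriel_filter_subset_carrier[OF G] in blast)
  show ?thesis
  proof
    assume "totally_torsion R F Q ((\<lambda>x. L +>\<^bsub>M\<^esub> x) ` X)"
    then obtain K where "K \<in> F" "\<forall>k\<in>K. \<forall>x\<in>X. k \<odot>\<^bsub>M\<^esub> x \<in> L" using image_iff by blast
    then show "totally_torsion R F M X"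
      using totally_torsion_extension[OF R.is_cring G module_axioms X \<open>totally_torsion R F M L\<close>] by blast
  next
    assume "totally_torsion R F M X"
    then obtain K where "K \<in> F" "\<forall>k\<in>K. \<forall>x\<in>X. k \<odot>\<^bsub>M\<^esub> x = \<zero>\<^bsub>M\<^esub>"
      unfolding totally_torsion_iff[OF module_axioms] by blast
    moreover have "\<zero>\<^bsub>M\<^esub> \<in> L" using submodule_zero_closed[OF submodule_L] .
    ultimately have "\<forall>k\<in>K. \<forall>x\<in>X. k \<odot>\<^bsub>M\<^esub> x \<in> L" by simp
    then show "totally_torsion R F Q ((\<lambda>x. L +>\<^bsub>M\<^esub> x) ` X)"
      using image_iff \<open>K \<in> F\<close> by blast
  qed
qed

lemma smult_mem_of_coset_mem:
  assumes "b \<in> carrier R" and annihilates: "\<And>l. l \<in> L \<Longrightarrow> b \<odot>\<^bsub>M\<^esub> l = \<zero>\<^bsub>M\<^esub>"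
    and H: "submodule H R M" and y: "y \<in> carrier M" and "L +>\<^bsub>M\<^esub> y \<in> (\<lambda>x. L +>\<^bsub>M\<^esub> x) ` H"
  shows "b \<odot>\<^bsub>M\<^esub> y \<in> H"
proof -
  obtain z where "z \<in> H" and coset: "L +>\<^bsub>M\<^esub> y = L +>\<^bsub>M\<^esub> z" using assms(5) by blast
  have z: "z \<in> carrier M" using submoduleE(1)[OF H] \<open>z \<in> H\<close> by blast
  have "y \<oplus>\<^bsub>M\<^esub> \<ominus>\<^bsub>M\<^esub> z \<in> L" using coset coset_eq_iff[OF z y] by simp
  have "y = (y \<oplus>\<^bsub>M\<^esub> \<ominus>\<^bsub>M\<^esub> z) \<oplus>\<^bsub>M\<^esub> z" using y z by (simp add: M.a_assoc M.l_neg)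
  then have "b \<odot>\<^bsub>M\<^esub> y = b \<odot>\<^bsub>M\<^esub> ((y \<oplus>\<^bsub>M\<^esub> \<ominus>\<^bsub>M\<^esub> z) \<oplus>\<^bsub>M\<^esub> z)" by (simp only: flip: \<open>y = _\<close>)
  also have "\<dots> = b \<odot>\<^bsub>M\<^esub> (y \<oplus>\<^bsub>M\<^esub> \<ominus>\<^bsub>M\<^esub> z) \<oplus>\<^bsub>M\<^esub> b \<odot>\<^bsub>M\<^esub> z"
    using \<open>b \<in> carrier R\<close> y z by (intro smult_r_distr) auto
  also have "\<dots> = b \<odot>\<^bsub>M\<^esub> z"
    using annihilates[OF \<open>y \<oplus>\<^bsub>M\<^esub> \<ominus>\<^bsub>M\<^esub> z \<in> L\<close>] \<open>b \<in> carrier R\<close> z by simp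
  finally show ?thesis using submoduleE(4)[OF H \<open>b \<in> carrier R\<close> \<open>z \<in> H\<close>] by simp
qed

lemma totally_torsion_quotient_carrier_iff:
  assumes G: "gabriel_filter R F" and L_torsion: "totally_torsion R F M L"
  shows "totally_torsion R F Q (carrier Q) \<longleftrightarrow> totally_torsion R F M (carrier M)"
  using totally_torsion_quotient_image_iff[OF G L_torsion carrier_is_submodule]
  by (simp add: quotient_carrier)

lemma totally_simple_quotient:
  assumes G: "gabriel_filter R F" and L_torsion: "totally_torsion R F M L"
    and simple: "totally_simple R F M"
  shows "totally_simple R F Q"
proof -
  obtain h where "h \<in> F" and "\<not> totally_torsion R F M (carrier M)"
    and h: "\<forall>H. submodule H R M \<and> \<not> totally_torsion R F M H \<longrightarrow> (\<forall>k\<in>h. \<forall>x\<in>carrier M. k \<odot>\<^bsub>M\<^esub> x \<in> H)"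
    using simple unfolding totally_simple_iff by blast
  have "\<forall>Hb. submodule Hb R Q \<and> \<not> totally_torsion R F Q Hb \<longrightarrow> (\<forall>k\<in>h. \<forall>C\<in>carrier Q. k \<odot>\<^bsub>Q\<^esub> C \<in> Hb)"
  proof (intro allI impI ballI; elim conjE)
    fix Hb k C assume Hb: "submodule Hb R Q" "\<not> totally_torsion R F Q Hb" and "k \<in> h" "C \<in> carrier Q"
    obtain x where x: "x \<in> carrier M" "C = L +>\<^bsub>M\<^esub> x" using \<open>C \<in> carrier Q\<close> by (rule quotient_cases)
    define H where "H = {x \<in> carrier M. L +>\<^bsub>M\<^esub> x \<in> Hb}"
    have H: "submodule H R M" unfolding H_def by (rule submodule_quotient_preimage[OF Hb(1)])
    moreover have "(\<lambda>x. L +>\<^bsub>M\<^esub> x) ` H = Hb"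
      unfolding H_def using image_quotient_preimage module.submoduleE(1)[OF quotient_module Hb(1)] .
    ultimately have "\<not> totally_torsion R F M H"
      using totally_torsion_quotient_image_iff[OF G L_torsion H] Hb(2) by simp
    then have "k \<odot>\<^bsub>M\<^esub> x \<in> H" using h H \<open>k \<in> h\<close> x(1) by blast
    moreover have "k \<in> carrier R" using gabriel_filter_subset_carrier[OF G \<open>h \<in> F\<close>] \<open>k \<in> h\<close> by blast
    ultimately show "k \<odot>\<^bsub>Q\<^esub> C \<in> Hb" using x by (simp add: H_def quotient_smult_coset)
  qed
  moreover have "\<not> totally_torsion R F Q (carrier Q)"
    using totally_torsion_quotient_carrier_iff[OF G L_torsion] \<open>\<not> totally_torsion R F M (carrier M)\<close>
    by simp
  ultimately show "totally_simple R F Q"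
    unfolding totally_simple_iff using \<open>h \<in> F\<close> by blast
qed

lemma totally_simple_of_totally_simple_quotient:
  assumes G: "gabriel_filter R F" and L_torsion: "totally_torsion R F M L"
    and simple: "totally_simple R F Q"
  shows "totally_simple R F M"
proof -
  obtain h where "h \<in> F" and "\<not> totally_torsion R F Q (carrier Q)"
    and h: "\<forall>Hb. submodule Hb R Q \<and> \<not> totally_torsion R F Q Hb \<longrightarrow> (\<forall>k\<in>h. \<forall>C\<in>carrier Q. k \<odot>\<^bsub>Q\<^esub> C \<in> Hb)"
    using simple unfolding totally_simple_iff by blast
  obtain K0 where "K0 \<in> F" and K0: "\<forall>b\<in>K0. \<forall>l\<in>L. b \<odot>\<^bsub>M\<^esub> l = \<zero>\<^bsub>M\<^esub>"
    using L_torsion unfolding totally_torsion_iff[OF module_axioms] by blast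
  define S where "S = {H. submodule H R M \<and> \<not> totally_torsion R F M H}"
  have "\<exists>J\<in>F. \<forall>H\<in>S. \<forall>k\<in>J. \<forall>x\<in>carrier M. k \<odot>\<^bsub>M\<^esub> x \<in> H"
  proof (rule gabriel_filter_uniform_multiple[OF R.is_cring G module_axioms _ _ _ \<open>h \<in> F\<close> \<open>K0 \<in> F\<close>])
    fix H a b x assume "H \<in> S" "a \<in> h" "b \<in> K0" and x: "x \<in> carrier M"
    then have H: "submodule H R M" and "\<not> totally_torsion R F M H" by (simp_all add: S_def)
    have a: "a \<in> carrier R" and b: "b \<in> carrier R"
      using gabriel_filter_subset_carrier[OF G] \<open>h \<in> F\<close> \<open>K0 \<in> F\<close> \<open>a \<in> h\<close> \<open>b \<in> K0\<close> by blast+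
    have "submodule ((\<lambda>x. L +>\<^bsub>M\<^esub> x) ` H) R Q" "\<not> totally_torsion R F Q ((\<lambda>x. L +>\<^bsub>M\<^esub> x) ` H)"
      using submodule_quotient_image[OF H] totally_torsion_quotient_image_iff[OF G L_torsion H]
        \<open>\<not> totally_torsion R F M H\<close> by simp_all
    then have "\<forall>k\<in>h. \<forall>C\<in>carrier Q. k \<odot>\<^bsub>Q\<^esub> C \<in> (\<lambda>x. L +>\<^bsub>M\<^esub> x) ` H"
      using h by blast
    then have "a \<odot>\<^bsub>Q\<^esub> (L +>\<^bsub>M\<^esub> x) \<in> (\<lambda>x. L +>\<^bsub>M\<^esub> x) ` H"
      using \<open>a \<in> h\<close> coset_in_quotient[OF x] by blast
    then have "L +>\<^bsub>M\<^esub> (a \<odot>\<^bsub>M\<^esub> x) \<in> (\<lambda>x. L +>\<^bsub>M\<^esub> x) ` H"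
      by (simp add: quotient_smult_coset[OF a x])
    then show "b \<odot>\<^bsub>M\<^esub> (a \<odot>\<^bsub>M\<^esub> x) \<in> H"
      using smult_mem_of_coset_mem[OF b _ H] K0 \<open>b \<in> K0\<close> a x by simp
  qed (auto simp: S_def)
  moreover have "\<not> totally_torsion R F M (carrier M)"
    using totally_torsion_quotient_carrier_iff[OF G L_torsion] \<open>\<not> totally_torsion R F Q (carrier Q)\<close>
    by simp
  ultimately show "totally_simple R F M"
    unfolding totally_simple_iff S_def by blast
qed

lemma totally_simple_quotient_iff:
  assumes "gabriel_filter R F" and "totally_torsion R F M L"
  shows "totally_simple R F M \<longleftrightarrow> totally_simple R F Q"
  using totally_simple_quotient totally_simple_of_totally_simple_quotient assms by blast

end

theorem mainTheorem20:
  fixes R :: "('a, 'c) ring_scheme"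
    and F :: "'a set set"
  assumes "cring R"
    and "gabriel_filter R F"
  shows "(\<forall>(M :: ('a, 'b) module) L.
            module R M \<and> submodule L R M \<and> totally_torsion R F M L \<longrightarrow>
            (totally_simple R F M \<longleftrightarrow> totally_simple R F (quot_module R M L)))
       \<and> (\<forall>(M' :: ('a, 'e) module) N h0.
            module R M' \<and> submodule N R M' \<and> h0 \<in> F \<and>
            module_ideal_prod R M' (carrier M') h0 \<subseteq> N \<longrightarrow>
            (totally_simple R F (M'\<lparr>carrier := N\<rparr>) \<longleftrightarrow> totally_simple R F M'))"
proof (intro conjI allI impI; elim conjE)
  fix M :: "('a, 'b) module" and L
  assume "module R M" "submodule L R M" "totally_torsion R F M L"
  then interpret submodule_quotient R M L by (simp add: submodule_quotient_def submodule_quotient_axioms_def)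
  show "totally_simple R F M \<longleftrightarrow> totally_simple R F (quot_module R M L)"
    by (rule totally_simple_quotient_iff[OF assms(2) \<open>totally_torsion R F M L\<close>])
next
  fix M' :: "('a, 'e) module" and N h0
  assume "module R M'" "submodule N R M'" "h0 \<in> F" "module_ideal_prod R M' (carrier M') h0 \<subseteq> N"
  then show "totally_simple R F (M'\<lparr>carrier := N\<rparr>) \<longleftrightarrow> totally_simple R F M'"
    by (rule totally_simple_submodule_iff[OF assms])
qed

end
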